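(* Let $U\in\mathcal{U}_N$ be $\varepsilon$-far from every quantum $k$-junta, and relabel the qubits so that $\mathrm{Inf}_1[U]\ge\mathrm{Inf}_2[U]\ge\cdots\ge\mathrm{Inf}_n[U]$ (with $\mathrm{Inf}_j[U]:=0$ for $j>n$). Then either $\sum_{j=k+1}^{200k}\mathrm{Inf}_j[U]\le\varepsilon^2/8$, or there exists $l\in\{0,1,\dots,\lfloor\log(200k)\rfloor\}$ such that $$\left|\left\{j\in[n]:\mathrm{Inf}_j[U]\ge\frac{\varepsilon^2}{2^{l+5}\log(400k)}\right\}\right|\ge k+2^l.$$
   Context: $N=2^n$, $\mathcal{U}_N$ is the set of $N\times N$ unitaries; logarithms are base 2. For $x\in\mathbb{Z}_4^n$, $\sigma_x=\sigma_{x_1}\otimes\cdots\otimes\sigma_{x_n}$ with Pauli matrices $\sigma_0=I,\sigma_1=X,\sigma_2=Y,\sigma_3=Z$. Writing $U=\sum_x\widehat{U}(x)\sigma_x$, the influence of qubit $j$ is $\mathrm{Inf}_j[U]=\sum_{x:\,x_j\ne0}|\widehat{U}(x)|^2$. A unitary is a quantum $k$-junta if it equals $V_S\otimes I_{\overline{S}}$ for some $S\subseteq[n]$, $|S|=k$, $V_S\in\mathcal{U}_{2^k}$; $U$ is $\varepsilon$-far from every quantum $k$-junta if $\min_{\theta}\frac{1}{\sqrt{2N}}\|e^{i\theta}U-V\|\ge\varepsilon$ (Frobenius norm) for all quantum $k$-juntas $V$. *)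

theory Defs
  imports "HOL-Analysis.Analysis"
begin

text \<open>Matrices of size d x d are functions nat => nat => complex, with
  indices in {0..<d}.  Entries outside the range are ignored.  For n qubits,
  N = 2^n; qubit j (0 \<le> j < n) of a basis index a < N is the bit (a div 2^j) mod 2.\<close>

type_synonym cmat = "nat \<Rightarrow> nat \<Rightarrow> complex"

definition unitary_mat :: "nat \<Rightarrow> cmat \<Rightarrow> bool" where
  "unitary_mat d U \<longleftrightarrow>
     (\<forall>a<d. \<forall>b<d. (\<Sum>c<d. U a c * cnj (U b c)) = (if a = b then 1 else 0)) \<and>
     (\<forall>a<d. \<forall>b<d. (\<Sum>c<d. cnj (U c a) * U c b) = (if a = b then 1 else 0))"

definition bit_of :: "nat \<Rightarrow> nat \<Rightarrow> nat" where
  "bit_of a j = (a div 2 ^ j) mod 2"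

definition pauli1 :: "nat \<Rightarrow> nat \<Rightarrow> nat \<Rightarrow> complex" where
  "pauli1 s r c =
     (if s = 0 then (if r = c then 1 else 0)
      else if s = 1 then (if r \<noteq> c then 1 else 0)
      else if s = 2 then (if r = 0 \<and> c = 1 then - \<i> else if r = 1 \<and> c = 0 then \<i> else 0)
      else (if r = c then (if r = 0 then 1 else -1) else 0))"

text \<open>Pauli strings x in Z_4^n, represented by functions with x j < 4 for j < n
  and x j = 0 for j \<ge> n.\<close>
definition pauli_strings :: "nat \<Rightarrow> (nat \<Rightarrow> nat) set" where
  "pauli_strings n = {x. (\<forall>j<n. x j < 4) \<and> (\<forall>j\<ge>n. x j = 0)}"

definition pauli_string :: "nat \<Rightarrow> (nat \<Rightarrow> nat) \<Rightarrow> cmat" where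
  "pauli_string n x = (\<lambda>a b. \<Prod>j<n. pauli1 (x j) (bit_of a j) (bit_of b j))"

text \<open>Pauli (Fourier) coefficient: the coefficient of sigma_x in the expansion
  U = sum_x Uhat(x) sigma_x, i.e. Uhat(x) = tr(sigma_x^dagger U) / N.\<close>
definition pauli_coeff :: "nat \<Rightarrow> cmat \<Rightarrow> (nat \<Rightarrow> nat) \<Rightarrow> complex" where
  "pauli_coeff n U x =
     (\<Sum>a<2^n. \<Sum>b<2^n. cnj (pauli_string n x b a) * U b a) / of_nat (2 ^ n)"

definition influence :: "nat \<Rightarrow> cmat \<Rightarrow> nat \<Rightarrow> real" where
  "influence n U j = (\<Sum>x\<in>{x\<in>pauli_strings n. x j \<noteq> 0}. (cmod (pauli_coeff n U x))\<^sup>2)"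

text \<open>Index of the restriction of basis index a to the qubits in S
  (enumerated in increasing order).\<close>
definition restrict_idx :: "nat set \<Rightarrow> nat \<Rightarrow> nat" where
  "restrict_idx S a = (\<Sum>i<card S. bit_of a (sorted_list_of_set S ! i) * 2 ^ i)"

text \<open>V_S \<otimes> I_{complement of S}\<close>
definition tensor_on :: "nat \<Rightarrow> nat set \<Rightarrow> cmat \<Rightarrow> cmat" where
  "tensor_on n S V = (\<lambda>a b. if (\<forall>j\<in>{0..<n} - S. bit_of a j = bit_of b j)
                             then V (restrict_idx S a) (restrict_idx S b) else 0)"

definition quantum_junta :: "nat \<Rightarrow> nat \<Rightarrow> cmat \<Rightarrow> bool" where
  "quantum_junta n k W \<longleftrightarrow>
     (\<exists>S V. S \<subseteq> {0..<n} \<and> card S = k \<and> unitary_mat (2 ^ k) V \<and>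
            (\<forall>a<2^n. \<forall>b<2^n. W a b = tensor_on n S V a b))"

definition frob_norm :: "nat \<Rightarrow> cmat \<Rightarrow> real" where
  "frob_norm d A = sqrt (\<Sum>a<d. \<Sum>b<d. (cmod (A a b))\<^sup>2)"

definition far_from_juntas :: "nat \<Rightarrow> nat \<Rightarrow> real \<Rightarrow> cmat \<Rightarrow> bool" where
  "far_from_juntas n k \<epsilon> U \<longleftrightarrow>
     (\<forall>W. quantum_junta n k W \<longrightarrow>
        (\<forall>\<theta>::real. frob_norm (2^n) (\<lambda>a b. exp (\<i> * of_real \<theta>) * U a b - W a b)
                     / sqrt (2 * 2 ^ n) \<ge> \<epsilon>))"

end

theory Submission
  imports Defs
begin

text \<open>If no level l has k + 2^l influences above
  \<epsilon>^2 / (2^(l+5) log(400k)), then for 2^l \<le> m < 2^(l+1) the (k+m)-th influence lies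
  below that level, hence below \<epsilon>^2 / (16 m log(400k)). Summing over m \<le> 199k yields a
  harmonic sum, and H(199k) \<le> 1 + ln(199k) \<le> log(400k), so the tail is at most \<epsilon>^2/16.\<close>

lemma harm_le_1_plus_ln:
  assumes "n > 0"
  shows "(harm n :: real) \<le> 1 + ln (real n)"
  using euler_mascheroni_sequence_decreasing[of 1 n] assms by (simp add: harm_def)

lemma ln_le_log2:
  assumes "1 \<le> x"
  shows "ln x \<le> log 2 x"
proof -
  have "ln (2::real) \<le> 1" using ln_le_minus_one[of 2] by simp
  moreover have "0 \<le> ln x" using assms by simp
  ultimately show ?thesis unfolding log_def by (simp add: le_divide_eq mult_left_le)
qed

lemma harm_le_log2_double:
  assumes "m > 0"
  shows "(harm m :: real) \<le> log 2 (2 * real m)"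
proof -
  have "harm m \<le> 1 + ln (real m)" using harm_le_1_plus_ln assms .
  also have "\<dots> \<le> 1 + log 2 (real m)" using ln_le_log2[of "real m"] assms by simp
  also have "\<dots> = log 2 (2 * real m)" using assms by (simp add: log_mult_pos)
  finally show ?thesis .
qed

lemma index_le_card_superlevel:
  fixes f :: "nat \<Rightarrow> real"
  assumes "antimono_on {1..n} f" and "j \<in> {1..n}" and "t \<le> f j"
  shows "j \<le> card {i\<in>{1..n}. t \<le> f i}"
proof -
  have "t \<le> f i" if "i \<in> {1..j}" for i
    using monotone_onD[OF assms(1), of i j] assms(2,3) that by auto
  then have "{1..j} \<subseteq> {i\<in>{1..n}. t \<le> f i}"
    using assms(2) by auto
  then show ?thesis using card_mono[of "{i\<in>{1..n}. t \<le> f i}" "{1..j}"] by simp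
qed

lemma below_threshold_beyond_card:
  fixes f :: "nat \<Rightarrow> real"
  assumes "antimono_on {1..n} f" and "\<And>j. j \<notin> {1..n} \<Longrightarrow> f j = 0"
    and "0 < t" and "card {i\<in>{1..n}. t \<le> f i} < p" and "p \<le> j"
  shows "f j < t"
proof (rule ccontr)
  assume "\<not> f j < t"
  then have "t \<le> f j" by simp
  with assms(2,3) have "j \<in> {1..n}" by force
  with \<open>t \<le> f j\<close> assms(1,4,5) show False
    using index_le_card_superlevel[of n f j t] by linarith
qed

lemma dyadic_tail_sum_le_harm:
  fixes f :: "nat \<Rightarrow> real"
  assumes "antimono_on {1..n} f" and "\<And>j. j \<notin> {1..n} \<Longrightarrow> f j = 0" and "0 < c"
    and few: "\<And>l. 2 ^ l \<le> M \<Longrightarrow> card {j\<in>{1..n}. c / 2 ^ l \<le> f j} < k + 2 ^ l"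
  shows "(\<Sum>m=1..M. f (k + m)) \<le> 2 * c * harm M"
proof -
  have term_le: "f (k + m) \<le> 2 * c * inverse (real m)" if "1 \<le> m" "m \<le> M" for m
  proof -
    obtain l where l: "2 ^ l \<le> m" "m < 2 ^ (l + 1)"
      using ex_power_ivl1[of 2 m] \<open>1 \<le> m\<close> by auto
    have "f (k + m) < c / 2 ^ l"
      using below_threshold_beyond_card[OF assms(1,2), of "c / 2 ^ l" "k + 2 ^ l" "k + m"]
        few[of l] l that \<open>0 < c\<close> by simp
    also have "\<dots> \<le> 2 * c * inverse (real m)"
    proof -
      have "real m < real (2 * 2 ^ l)" using l(2) by (simp only: of_nat_less_iff) simp
      then show ?thesis using \<open>0 < c\<close> \<open>1 \<le> m\<close> by (simp add: field_simps)
    qed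
    finally show ?thesis by simp
  qed
  have "(\<Sum>m=1..M. f (k + m)) \<le> (\<Sum>m=1..M. 2 * c * inverse (real m))"
    by (intro sum_mono term_le) auto
  also have "\<dots> = 2 * c * harm M" by (simp add: harm_def sum_distrib_left)
  finally show ?thesis .
qed

theorem mainTheorem9:
  fixes n k :: nat and \<epsilon> :: real and U :: cmat and \<pi> :: "nat \<Rightarrow> nat"
  assumes "0 < \<epsilon>"
    and "unitary_mat (2 ^ n) U"
    and "far_from_juntas n k \<epsilon> U"
    and "bij_betw \<pi> {1..n} {0..<n}"
    and "\<And>i j. 1 \<le> i \<Longrightarrow> i \<le> j \<Longrightarrow> j \<le> n \<Longrightarrow> influence n U (\<pi> i) \<ge> influence n U (\<pi> j)"
  defines "InfS \<equiv> (\<lambda>j. if 1 \<le> j \<and> j \<le> n then influence n U (\<pi> j) else 0)"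
  shows "(\<Sum>j=k+1..200*k. InfS j) \<le> \<epsilon>\<^sup>2 / 8 \<or>
         (\<exists>l::nat. l \<le> nat \<lfloor>log 2 (200 * real k)\<rfloor> \<and>
            card {j\<in>{1..n}. InfS j \<ge> \<epsilon>\<^sup>2 / (2 ^ (l + 5) * log 2 (400 * real k))} \<ge> k + 2 ^ l)"
proof (cases "k = 0")
  case True
  then show ?thesis using assms(1) by simp
next
  case False
  define Lg where "Lg = log 2 (400 * real k)"
  define c where "c = \<epsilon>\<^sup>2 / (32 * Lg)"
  have "harm (199 * k) \<le> log 2 (2 * real (199 * k))"
    using harm_le_log2_double[of "199 * k"] False by simp
  also have "\<dots> \<le> Lg" using False by (simp add: Lg_def)
  finally have harm_le_Lg: "harm (199 * k) \<le> Lg" .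
  moreover have "(0::real) < harm (199 * k)" using False by simp
  ultimately have "0 < Lg" by linarith
  show ?thesis
  proof (rule disjCI)
    assume no_level: "\<not> (\<exists>l::nat. l \<le> nat \<lfloor>log 2 (200 * real k)\<rfloor> \<and>
            card {j\<in>{1..n}. InfS j \<ge> \<epsilon>\<^sup>2 / (2 ^ (l + 5) * log 2 (400 * real k))} \<ge> k + 2 ^ l)"
    have antimono: "antimono_on {1..n} InfS"
      by (intro monotone_onI) (simp add: InfS_def assms(5))
    have vanish: "InfS j = 0" if "j \<notin> {1..n}" for j
      using that by (auto simp: InfS_def)
    have few: "card {j\<in>{1..n}. c / 2 ^ l \<le> InfS j} < k + 2 ^ l" if "2 ^ l \<le> 199 * k" for l
    proof -
      have "real l \<le> log 2 (200 * real k)"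
        using le_log2_of_power[of l "200 * k"] that by simp
      then have "l \<le> nat \<lfloor>log 2 (200 * real k)\<rfloor>" by linarith
      moreover have "c / 2 ^ l = \<epsilon>\<^sup>2 / (2 ^ (l + 5) * Lg)"
        by (simp add: c_def power_add)
      ultimately show ?thesis using no_level unfolding Lg_def not_le by auto
    qed
    have "(\<Sum>j=k+1..200*k. InfS j) = (\<Sum>m=1..199*k. InfS (k + m))"
      using sum.shift_bounds_cl_nat_ivl[of InfS 1 k "199 * k"] by (simp add: add.commute)
    also have "\<dots> \<le> 2 * c * harm (199 * k)"
      using dyadic_tail_sum_le_harm[OF antimono vanish _ few] \<open>0 < Lg\<close> assms(1)
      by (simp add: c_def)
    also have "\<dots> \<le> 2 * c * Lg"
      using harm_le_Lg \<open>0 < Lg\<close> by (intro mult_left_mono) (simp_all add: c_def)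
    also have "\<dots> \<le> \<epsilon>\<^sup>2 / 8"
      using \<open>0 < Lg\<close> by (simp add: c_def)
    finally show "(\<Sum>j=k+1..200*k. InfS j) \<le> \<epsilon>\<^sup>2 / 8" .
  qed
qed

end
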